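(* There is an absolute constant $c>0$ such that the following holds. Let $(V,E^+\uplus E^-)$ be a Correlation Clustering instance with optimum cost $\mathrm{opt}$, let $\mathcal C$ be a clustering of $V$ with $\mathrm{obj}(\mathcal C)\le3\,\mathrm{opt}$, and let $\mathcal K$ be the partition of $V$ constructed from $\mathcal C$ as described in the context (with $\beta=0.1$). Then $\mathrm{obj}(\mathcal K)\le c\cdot\mathrm{opt}$, where $\mathcal K$ is viewed as a clustering.
   Context: A Correlation Clustering instance consists of a finite vertex set $V$ and a partition $E^+\uplus E^-=\binom V2$ of unordered pairs of distinct vertices into $+$edges and $-$edges. For a clustering (partition) $\mathcal C$ of $V$, $\mathrm{obj}(\mathcal C)$ is the number of $+$edges between different parts plus the number of $-$edges inside parts; $\mathrm{opt}$ is its minimum. By convention every vertex has a $+$ self-loop, so the set $N^+_u$ of $+$neighbours of $u$ contains $u$ (self-loops never contribute to cost). $A\triangle B$ denotes symmetric difference. Construction of $\mathcal K$ with $\beta=0.1$: for every non-singleton $C\in\mathcal C$, mark every $u\in C$ with $|N^+_u\triangle C|>\frac\beta2|C|$, and then, if at least $\frac{\beta|C|}{3}$ vertices of $C$ are marked, mark all vertices of $C$. $\mathcal K$ is obtained from $\mathcal C$ by removing every marked vertex from its cluster and making it a singleton cluster. The parts of $\mathcal K$ are called atoms. *)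

theory Defs
  imports Complex_Main
begin

(* A Correlation Clustering instance: finite vertex set V and a symmetric
   relation E on V giving the +edges; every other pair of distinct vertices
   of V is a -edge. *)
definition cc_instance :: "'a set \<Rightarrow> ('a \<Rightarrow> 'a \<Rightarrow> bool) \<Rightarrow> bool" where
  "cc_instance V E \<longleftrightarrow> finite V \<and> (\<forall>u v. E u v \<longrightarrow> E v u)"

definition is_clustering :: "'a set \<Rightarrow> 'a set set \<Rightarrow> bool" where
  "is_clustering V \<C> \<longleftrightarrow> \<Union>\<C> = V \<and> {} \<notin> \<C> \<and>
     (\<forall>A\<in>\<C>. \<forall>B\<in>\<C>. A \<noteq> B \<longrightarrow> A \<inter> B = {})"

definition same_cluster :: "'a set set \<Rightarrow> 'a \<Rightarrow> 'a \<Rightarrow> bool" where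
  "same_cluster \<C> u v \<longleftrightarrow> (\<exists>A\<in>\<C>. u \<in> A \<and> v \<in> A)"

definition obj :: "'a set \<Rightarrow> ('a \<Rightarrow> 'a \<Rightarrow> bool) \<Rightarrow> 'a set set \<Rightarrow> nat" where
  "obj V E \<C> = card {{u, v} | u v. u \<in> V \<and> v \<in> V \<and> u \<noteq> v \<and>
      ((E u v \<and> \<not> same_cluster \<C> u v) \<or> (\<not> E u v \<and> same_cluster \<C> u v))}"

definition opt :: "'a set \<Rightarrow> ('a \<Rightarrow> 'a \<Rightarrow> bool) \<Rightarrow> nat" where
  "opt V E = Min (obj V E ` {\<C>. is_clustering V \<C>})"

definition Nplus :: "'a set \<Rightarrow> ('a \<Rightarrow> 'a \<Rightarrow> bool) \<Rightarrow> 'a \<Rightarrow> 'a set" where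
  "Nplus V E u = {v \<in> V. v = u \<or> E u v}"

definition beta :: real where "beta = 1/10"

definition marked0 :: "'a set \<Rightarrow> ('a \<Rightarrow> 'a \<Rightarrow> bool) \<Rightarrow> 'a set \<Rightarrow> 'a set" where
  "marked0 V E C = {u \<in> C. real (card ((Nplus V E u - C) \<union> (C - Nplus V E u))) > beta / 2 * real (card C)}"

definition marked :: "'a set \<Rightarrow> ('a \<Rightarrow> 'a \<Rightarrow> bool) \<Rightarrow> 'a set \<Rightarrow> 'a set" where
  "marked V E C =
     (if card C \<le> 1 then {}
      else if real (card (marked0 V E C)) \<ge> beta * real (card C) / 3 then C
      else marked0 V E C)"

definition atoms :: "'a set \<Rightarrow> ('a \<Rightarrow> 'a \<Rightarrow> bool) \<Rightarrow> 'a set set \<Rightarrow> 'a set set" where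
  "atoms V E \<C> =
     {C - marked V E C | C. C \<in> \<C> \<and> C - marked V E C \<noteq> {}}
     \<union> {{u} | u. \<exists>C\<in>\<C>. u \<in> marked V E C}"

end

theory Submission
  imports Defs
begin

(* Splitting off the marked vertices as singletons creates new disagreements only along
   +edges joining a marked vertex to another vertex of its cluster C, at most |marked C| |C|
   of them. A vertex is marked in the first step only if it has more than (beta/2)|C|
   disagreements, and a whole cluster is marked only if at least (beta/3)|C| of its vertices
   were, so |marked C| |C| is at most (2/beta)(3/beta) = 600 times the number of
   disagreements at vertices of C. Summing over the clusters counts each disagreement of the
   clustering twice, so the atoms cost at most 1201 times the clustering, hence at most 3603 opt. *)

definition disagrees :: "('a \<Rightarrow> 'a \<Rightarrow> bool) \<Rightarrow> 'a set set \<Rightarrow> 'a \<Rightarrow> 'a \<Rightarrow> bool" where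
  "disagrees E \<C> u v \<longleftrightarrow> (E u v \<and> \<not> same_cluster \<C> u v) \<or> (\<not> E u v \<and> same_cluster \<C> u v)"

definition disagreements :: "'a set \<Rightarrow> ('a \<Rightarrow> 'a \<Rightarrow> bool) \<Rightarrow> 'a set set \<Rightarrow> 'a set set" where
  "disagreements V E \<C> = {{u, v} | u v. u \<in> V \<and> v \<in> V \<and> u \<noteq> v \<and> disagrees E \<C> u v}"

definition disagreement_nbrs :: "'a set \<Rightarrow> ('a \<Rightarrow> 'a \<Rightarrow> bool) \<Rightarrow> 'a set set \<Rightarrow> 'a \<Rightarrow> 'a set" where
  "disagreement_nbrs V E \<C> u = {v \<in> V. v \<noteq> u \<and> disagrees E \<C> u v}"

definition cluster_deviation :: "'a set \<Rightarrow> ('a \<Rightarrow> 'a \<Rightarrow> bool) \<Rightarrow> 'a set \<Rightarrow> 'a \<Rightarrow> nat" where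
  "cluster_deviation V E C u = card ((Nplus V E u - C) \<union> (C - Nplus V E u))"

lemma obj_eq_card_disagreements: "obj V E \<C> = card (disagreements V E \<C>)"
  unfolding obj_def disagreements_def disagrees_def by simp

lemma finite_disagreements: "finite V \<Longrightarrow> finite (disagreements V E \<C>)"
  by (rule finite_subset[of _ "Pow V"]) (auto simp: disagreements_def)

lemma card_doubleton_preimage_le:
  "card {(u, v). u \<noteq> v \<and> {u, v} = p} \<le> 2"
proof (cases "{(u, v). u \<noteq> v \<and> {u, v} = p} = {}")
  case False
  then obtain a b where p: "p = {a, b}" by blast
  have "{(u, v). u \<noteq> v \<and> {u, v} = p} \<subseteq> {(a, b), (b, a)}"
    unfolding p by (auto simp: doubleton_eq_iff)
  then have "card {(u, v). u \<noteq> v \<and> {u, v} = p} \<le> card {(a, b), (b, a)}"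
    by (intro card_mono) simp_all
  also have "\<dots> \<le> 2"
    by (rule card_insert_le_m1) simp_all
  finally show ?thesis .
qed (simp only: card.empty zero_le)

lemma sum_card_disagreement_nbrs_le:
  assumes "finite V"
  shows "(\<Sum>u\<in>V. card (disagreement_nbrs V E \<C> u)) \<le> 2 * obj V E \<C>"
proof -
  let ?D = "disagreements V E \<C>"
  have "(\<Sum>u\<in>V. card (disagreement_nbrs V E \<C> u)) = card (SIGMA u:V. disagreement_nbrs V E \<C> u)"
    using assms by (simp add: disagreement_nbrs_def)
  also have "\<dots> \<le> card (\<Union>p\<in>?D. {(u, v). u \<noteq> v \<and> {u, v} = p})"
  proof (rule card_mono)
    have "(\<Union>p\<in>?D. {(u, v). u \<noteq> v \<and> {u, v} = p}) \<subseteq> V \<times> V"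
      by (auto simp: disagreements_def doubleton_eq_iff)
    then show "finite (\<Union>p\<in>?D. {(u, v). u \<noteq> v \<and> {u, v} = p})"
      using assms finite_subset by blast
  qed (auto simp: disagreement_nbrs_def disagreements_def)
  also have "\<dots> \<le> (\<Sum>p\<in>?D. card {(u, v). u \<noteq> v \<and> {u, v} = p})"
    by (rule card_UN_le[OF finite_disagreements[OF assms]])
  also have "\<dots> \<le> (\<Sum>p\<in>?D. 2)"
    by (rule sum_mono) (rule card_doubleton_preimage_le)
  also have "\<dots> = 2 * card ?D" by simp
  finally show ?thesis by (simp add: obj_eq_card_disagreements)
qed

lemma same_cluster_iff_mem:
  assumes "is_clustering V \<C>" "C \<in> \<C>" "u \<in> C"
  shows "same_cluster \<C> u v \<longleftrightarrow> v \<in> C"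
  using assms unfolding is_clustering_def same_cluster_def by blast

lemma cluster_deviation_eq_card_disagreement_nbrs:
  assumes "is_clustering V \<C>" "C \<in> \<C>" "u \<in> C"
  shows "cluster_deviation V E C u = card (disagreement_nbrs V E \<C> u)"
proof -
  have "C \<subseteq> V" using assms unfolding is_clustering_def by blast
  then have "(Nplus V E u - C) \<union> (C - Nplus V E u) = disagreement_nbrs V E \<C> u"
    using assms(3) same_cluster_iff_mem[OF assms]
    unfolding disagreement_nbrs_def Nplus_def disagrees_def by blast
  then show ?thesis
    unfolding cluster_deviation_def by simp
qed

lemma marked_subset: "marked V E C \<subseteq> C"
  unfolding marked_def marked0_def by auto

lemma finite_clusters:
  assumes "finite V" "is_clustering V \<C>"
  shows "finite \<C>" and "C \<in> \<C> \<Longrightarrow> finite C"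
proof -
  have "\<C> \<subseteq> Pow V" using assms(2) unfolding is_clustering_def by blast
  then show "finite \<C>" and "C \<in> \<C> \<Longrightarrow> finite C"
    using assms(1) by (auto intro: finite_subset)
qed

lemma card_marked0_mult_card_le:
  assumes "finite C"
  shows "real (card (marked0 V E C)) * real (card C)
           \<le> 20 * (\<Sum>u\<in>C. real (cluster_deviation V E C u))"
proof -
  have "real (card (marked0 V E C)) * real (card C) / 20 = (\<Sum>u\<in>marked0 V E C. real (card C) / 20)"
    by simp
  also have "\<dots> \<le> (\<Sum>u\<in>marked0 V E C. real (cluster_deviation V E C u))"
    by (rule sum_mono) (simp add: marked0_def cluster_deviation_def beta_def)
  also have "\<dots> \<le> (\<Sum>u\<in>C. real (cluster_deviation V E C u))"
    by (rule sum_mono2) (use assms in \<open>auto simp: marked0_def\<close>)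
  finally show ?thesis by simp
qed

lemma card_marked_mult_card_le:
  assumes "finite C"
  shows "real (card (marked V E C)) * real (card C)
           \<le> 600 * (\<Sum>u\<in>C. real (cluster_deviation V E C u))"
proof -
  let ?m = "real (card (marked0 V E C))" and ?n = "real (card C)"
    and ?S = "\<Sum>u\<in>C. real (cluster_deviation V E C u)"
  have bound0: "?m * ?n \<le> 20 * ?S"
    using card_marked0_mult_card_le[OF assms] .
  have "0 \<le> ?S" by (simp add: sum_nonneg)
  consider "card C \<le> 1" | "\<not> card C \<le> 1" "beta * ?n / 3 \<le> ?m" | "\<not> card C \<le> 1" "\<not> beta * ?n / 3 \<le> ?m"
    by blast
  then show ?thesis
  proof cases
    case 1
    then show ?thesis using \<open>0 \<le> ?S\<close> by (simp add: marked_def)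
  next
    case 2
    then have "marked V E C = C" by (simp add: marked_def)
    have "?n * ?n \<le> 30 * (?m * ?n)"
      using 2 by (simp add: beta_def mult_right_mono)
    then show ?thesis using bound0 by (simp only: \<open>marked V E C = C\<close>)
  next
    case 3
    then show ?thesis using bound0 \<open>0 \<le> ?S\<close> by (simp add: marked_def)
  qed
qed

lemma same_cluster_atoms_imp_same_cluster:
  assumes "same_cluster (atoms V E \<C>) u v" "u \<noteq> v"
  shows "same_cluster \<C> u v"
  using assms marked_subset unfolding same_cluster_def atoms_def by blast

lemma same_cluster_atoms_if_unmarked:
  assumes "C \<in> \<C>" "u \<in> C" "v \<in> C" "u \<notin> marked V E C" "v \<notin> marked V E C"
  shows "same_cluster (atoms V E \<C>) u v"
proof -
  have "u \<in> C - marked V E C \<and> v \<in> C - marked V E C"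
    using assms by blast
  then have "C - marked V E C \<in> atoms V E \<C>"
    using assms(1) unfolding atoms_def by (intro UnI1) auto
  then show ?thesis
    unfolding same_cluster_def by (rule bexI[rotated]) fact
qed

lemma disagreements_atoms_subset:
  "disagreements V E (atoms V E \<C>)
     \<subseteq> disagreements V E \<C> \<union> (\<lambda>(u, v). {u, v}) ` (\<Union>C\<in>\<C>. marked V E C \<times> C)"
  (is "_ \<subseteq> _ \<union> (\<lambda>(u, v). {u, v}) ` ?Q")
proof
  fix p assume "p \<in> disagreements V E (atoms V E \<C>)"
  then obtain u v where p: "p = {u, v}" and uv: "u \<in> V" "v \<in> V" "u \<noteq> v"
    and dis: "disagrees E (atoms V E \<C>) u v"
    unfolding disagreements_def by blast
  show "p \<in> disagreements V E \<C> \<union> (\<lambda>(u, v). {u, v}) ` ?Q"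
  proof (cases "disagrees E \<C> u v")
    case True
    then have "p \<in> disagreements V E \<C>"
      unfolding disagreements_def p using uv by blast
    then show ?thesis by (rule UnI1)
  next
    case False
    have "E u v" and not_atoms: "\<not> same_cluster (atoms V E \<C>) u v"
      using dis False same_cluster_atoms_imp_same_cluster[of V E \<C> u v] uv(3)
      unfolding disagrees_def by blast+
    then have "same_cluster \<C> u v"
      using False unfolding disagrees_def by blast
    then obtain C where C: "C \<in> \<C>" "u \<in> C" "v \<in> C"
      unfolding same_cluster_def by blast
    then have "u \<in> marked V E C \<or> v \<in> marked V E C"
      using same_cluster_atoms_if_unmarked[of C \<C> u v V E] not_atoms by blast
    then have "(u, v) \<in> ?Q \<or> (v, u) \<in> ?Q"
      using C by blast
    then have "p \<in> (\<lambda>(u, v). {u, v}) ` ?Q"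
    proof (elim disjE)
      assume "(u, v) \<in> ?Q"
      then show ?thesis unfolding p by (rule image_eqI[rotated]) simp
    next
      assume "(v, u) \<in> ?Q"
      then show ?thesis unfolding p by (rule image_eqI[rotated]) (simp add: insert_commute)
    qed
    then show ?thesis by (rule UnI2)
  qed
qed

lemma obj_atoms_le:
  assumes "finite V" "is_clustering V \<C>"
  shows "obj V E (atoms V E \<C>) \<le> obj V E \<C> + (\<Sum>C\<in>\<C>. card (marked V E C) * card C)"
proof -
  let ?D = "disagreements V E \<C>" and ?Q = "\<Union>C\<in>\<C>. marked V E C \<times> C"
  have "finite (marked V E C \<times> C)" if "C \<in> \<C>" for C
    using finite_clusters(2)[OF assms that] finite_subset[OF marked_subset] by blast
  then have "finite ?Q"
    by (rule finite_UN_I[OF finite_clusters(1)[OF assms]])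
  have "obj V E (atoms V E \<C>) \<le> card (?D \<union> (\<lambda>(u, v). {u, v}) ` ?Q)"
    unfolding obj_eq_card_disagreements
  proof (rule card_mono)
    show "finite (?D \<union> (\<lambda>(u, v). {u, v}) ` ?Q)"
      using finite_disagreements[OF assms(1)] \<open>finite ?Q\<close> by blast
  qed (rule disagreements_atoms_subset)
  also have "\<dots> \<le> card ?D + card ((\<lambda>(u, v). {u, v}) ` ?Q)"
    by (rule card_Un_le)
  also have "\<dots> \<le> card ?D + card ?Q"
    using card_image_le[OF \<open>finite ?Q\<close>, of "\<lambda>(u, v). {u, v}"] by linarith
  also have "\<dots> \<le> card ?D + (\<Sum>C\<in>\<C>. card (marked V E C \<times> C))"
    using card_UN_le[OF finite_clusters(1)[OF assms], of "\<lambda>C. marked V E C \<times> C"] by linarith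
  finally show ?thesis
    by (simp add: obj_eq_card_disagreements card_cartesian_product)
qed

lemma sum_card_marked_mult_card_le:
  assumes "finite V" "is_clustering V \<C>"
  shows "real (\<Sum>C\<in>\<C>. card (marked V E C) * card C) \<le> 1200 * real (obj V E \<C>)"
proof -
  have "real (\<Sum>C\<in>\<C>. card (marked V E C) * card C)
          \<le> (\<Sum>C\<in>\<C>. 600 * (\<Sum>u\<in>C. real (cluster_deviation V E C u)))"
    unfolding of_nat_sum of_nat_mult
    by (rule sum_mono) (rule card_marked_mult_card_le[OF finite_clusters(2)[OF assms]])
  also have "\<dots> = 600 * (\<Sum>C\<in>\<C>. \<Sum>u\<in>C. real (card (disagreement_nbrs V E \<C> u)))"
    by (simp add: sum_distrib_left cluster_deviation_eq_card_disagreement_nbrs[OF assms(2)])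
  also have "\<dots> = 600 * (\<Sum>u\<in>V. real (card (disagreement_nbrs V E \<C> u)))"
    using assms(2) finite_clusters(2)[OF assms]
      sum.Union_disjoint[of \<C> "\<lambda>u. real (card (disagreement_nbrs V E \<C> u))"]
    by (simp add: is_clustering_def)
  also have "\<dots> \<le> 600 * real (2 * obj V E \<C>)"
    using sum_card_disagreement_nbrs_le[OF assms(1), of E \<C>]
    unfolding of_nat_sum[symmetric] of_nat_le_iff[symmetric, where 'a=real] by simp
  finally show ?thesis by simp
qed

theorem lemma6:
  "\<exists>c::real. c > 0 \<and>
     (\<forall>(V::nat set) E \<C>. cc_instance V E \<longrightarrow> is_clustering V \<C> \<longrightarrow>
        obj V E \<C> \<le> 3 * opt V E \<longrightarrow>
        real (obj V E (atoms V E \<C>)) \<le> c * real (opt V E))"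
proof (intro exI[of _ 3603] conjI allI impI)
  fix V :: "nat set" and E \<C>
  assume "cc_instance V E" "is_clustering V \<C>" and three_approx: "obj V E \<C> \<le> 3 * opt V E"
  then have "finite V" by (simp add: cc_instance_def)
  have "real (obj V E (atoms V E \<C>)) \<le> real (obj V E \<C>) + 1200 * real (obj V E \<C>)"
    using obj_atoms_le[OF \<open>finite V\<close> \<open>is_clustering V \<C>\<close>, of E]
      sum_card_marked_mult_card_le[OF \<open>finite V\<close> \<open>is_clustering V \<C>\<close>, of E]
    by linarith
  also have "\<dots> \<le> 1201 * (3 * real (opt V E))"
    using three_approx by simp
  finally show "real (obj V E (atoms V E \<C>)) \<le> 3603 * real (opt V E)" by simp
qed simp

end
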